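(* Let $k,r \in \mathbb{N}$ and $s \in [0, r]$. Then \[\mathsf{D}_k(C_{2}^{r}) \le \mathsf{D}_{\mathsf{D}_{k}(C_2^s) - s} (C_2^{r-s}) + s.\]
   Context: $C_2^m$ is the elementary abelian $2$-group of rank $m$ ($C_2^0$ is the trivial group). A sequence over a finite abelian group $G$ is a finite unordered list of elements with repetitions; zero-sum means its terms sum to $0$. $\mathsf{D}_k(G)$ ($k\in\mathbb{N}$) is the smallest $\ell$ such that every sequence over $G$ of length at least $\ell$ has $k$ disjoint non-empty zero-sum subsequences. *)

theory Defs
  imports Main "HOL-Library.Z2" "HOL-Library.Function_Algebras"
begin

text \<open>The elementary abelian 2-group C_2^m, realised as the vectors
  v : nat -> bit (bit = Z/2Z) supported on {0..<m}, with pointwise addition.\<close>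
definition C2pow :: "nat \<Rightarrow> (nat \<Rightarrow> bit) set" where
  "C2pow m = {v. \<forall>j\<ge>m. v j = 0}"

text \<open>A sequence over G is a list with all terms in G (order is irrelevant for
  the notions below).\<close>
definition has_disj_zero_sums :: "nat \<Rightarrow> ('a::comm_monoid_add) list \<Rightarrow> bool" where
  "has_disj_zero_sums k xs \<longleftrightarrow>
     (\<exists>I :: nat \<Rightarrow> nat set.
        (\<forall>i<k. I i \<noteq> {} \<and> I i \<subseteq> {..<length xs} \<and> (\<Sum>j\<in>I i. xs ! j) = 0) \<and>
        (\<forall>i<k. \<forall>i'<k. i \<noteq> i' \<longrightarrow> I i \<inter> I i' = {}))"

definition Dk :: "nat \<Rightarrow> ('a::comm_monoid_add) set \<Rightarrow> nat" where
  "Dk k G = (LEAST l. \<forall>xs. set xs \<subseteq> G \<and> length xs \<ge> l \<longrightarrow> has_disj_zero_sums k xs)"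

end

theory Submission
  imports Defs "HOL.Modules"
begin

text \<open>Gaussian elimination on the terms of \<open>xs\<close> yields homomorphisms \<open>\<pi>\<close> and \<open>\<psi>\<close> such that
  \<open>\<psi>\<close> embeds \<open>H = ker \<pi> \<inter> C_2^r\<close> into \<open>C_2^s\<close>, and either \<open>s\<close> terms of \<open>xs\<close> lie in \<open>H\<close> while
  \<open>\<pi>\<close> maps \<open>C_2^r\<close> into \<open>C_2^(r-s)\<close>, or every term of \<open>xs\<close> lies in \<open>H\<close>.  In the first case the
  other terms, at least \<open>D_(D-s)(C_2^(r-s))\<close> of them where \<open>D = D_k(C_2^s)\<close>, contain \<open>D - s\<close>
  disjoint blocks whose sums lie in \<open>H\<close>; with the \<open>s\<close> pivots as singleton blocks this gives \<open>D\<close>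
  elements of \<open>H\<close>, whose images under \<open>\<psi>\<close>, and hence the block sums themselves, split into
  \<open>k\<close> disjoint zero-sum groups.  In the second case \<open>xs\<close> is already a sequence of length at
  least \<open>D\<close> in \<open>H\<close>.\<close>

text \<open>Keep bit arithmetic as ring arithmetic instead of rewriting it to XOR/AND.\<close>
declare add_bit_eq_xor [simp del] mult_bit_eq_and [simp del]

section \<open>The groups \<open>C2pow m\<close>\<close>

lemma bit_add_self [simp]: "(a::bit) + a = 0"
  by (cases a) simp_all

lemma fun_bit_add_self [simp]: "(v::'a \<Rightarrow> bit) + v = 0"
  by (simp add: fun_eq_iff)

lemma C2pow_zero [simp]: "0 \<in> C2pow m"
  by (simp add: C2pow_def)

lemma C2pow_add: "x \<in> C2pow m \<Longrightarrow> y \<in> C2pow m \<Longrightarrow> x + y \<in> C2pow m"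
  by (simp add: C2pow_def)

lemma C2pow_sum: "(\<And>j. j \<in> A \<Longrightarrow> g j \<in> C2pow m) \<Longrightarrow> (\<Sum>j\<in>A. g j) \<in> C2pow m"
  by (induction A rule: infinite_finite_induct) (auto simp: C2pow_add)

lemma C2pow_mono: "s \<le> t \<Longrightarrow> C2pow s \<subseteq> C2pow t"
  by (auto simp: C2pow_def)

lemma finite_C2pow: "finite (C2pow m)"
proof -
  have "C2pow m \<subseteq> (\<lambda>S j. if j \<in> S then 1 else 0) ` Pow {..<m}"
  proof
    fix v assume "v \<in> C2pow m"
    then have "v = (\<lambda>j. if j \<in> {j. j < m \<and> v j = 1} then 1 else 0)"
      by (auto simp: C2pow_def fun_eq_iff)
    then show "v \<in> (\<lambda>S j. if j \<in> S then 1 else 0) ` Pow {..<m}" by blast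
  qed
  then show ?thesis by (rule finite_subset) simp
qed

section \<open>Disjoint blocks of positions\<close>

definition disjoint_blocks :: "nat \<Rightarrow> nat \<Rightarrow> (nat \<Rightarrow> nat set) \<Rightarrow> bool" where
  "disjoint_blocks n k B \<longleftrightarrow>
     (\<forall>i<k. B i \<noteq> {} \<and> B i \<subseteq> {..<n}) \<and> (\<forall>i<k. \<forall>i'<k. i \<noteq> i' \<longrightarrow> B i \<inter> B i' = {})"

lemma has_disj_zero_sums_iff_blocks:
  "has_disj_zero_sums k xs \<longleftrightarrow>
     (\<exists>B. disjoint_blocks (length xs) k B \<and> (\<forall>i<k. (\<Sum>j\<in>B i. xs ! j) = 0))"
  unfolding has_disj_zero_sums_def disjoint_blocks_def by (intro ex_cong1) auto

lemma disjoint_blocksD: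
  assumes "disjoint_blocks n k B" "i < k"
  shows "B i \<noteq> {}" "B i \<subseteq> {..<n}" "i' < k \<Longrightarrow> i \<noteq> i' \<Longrightarrow> B i \<inter> B i' = {}"
  using assms by (simp_all add: disjoint_blocks_def)

lemma has_disj_zero_sums_mono:
  "has_disj_zero_sums k xs \<Longrightarrow> l \<le> k \<Longrightarrow> has_disj_zero_sums l xs"
  unfolding has_disj_zero_sums_def by (metis order_less_le_trans)

lemma disjoint_blocks_le:
  assumes "disjoint_blocks n k B"
  shows "k \<le> n"
proof -
  have "\<forall>i<k. \<exists>a. a \<in> B i" using assms by (auto simp: disjoint_blocks_def)
  then obtain f where f: "\<And>i. i < k \<Longrightarrow> f i \<in> B i" by metis
  have "inj_on f {..<k}"
    using assms f by (auto intro!: inj_onI simp: disjoint_blocks_def) (metis IntI empty_iff)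
  moreover have "f ` {..<k} \<subseteq> {..<n}" using assms f by (auto simp: disjoint_blocks_def)
  ultimately show ?thesis using card_inj_on_le[of f "{..<k}" "{..<n}"] by simp
qed

lemma has_disj_zero_sums_length_le: "has_disj_zero_sums k xs \<Longrightarrow> k \<le> length xs"
  by (auto simp: has_disj_zero_sums_iff_blocks dest: disjoint_blocks_le)

lemma disjoint_blocks_UN:
  assumes "disjoint_blocks n D B" "disjoint_blocks D k K"
  shows "disjoint_blocks n k (\<lambda>l. \<Union>i\<in>K l. B i)"
  unfolding disjoint_blocks_def
proof (intro conjI allI impI)
  fix l assume "l < k"
  then have K: "K l \<noteq> {}" "K l \<subseteq> {..<D}" using assms(2) by (auto simp: disjoint_blocks_def)
  have B: "B i \<noteq> {}" "B i \<subseteq> {..<n}" if "i < D" for i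
    using assms(1) that by (auto simp: disjoint_blocks_def)
  obtain i where "i \<in> K l" using K(1) by blast
  then show "(\<Union>i\<in>K l. B i) \<noteq> {}" using K(2) B(1) by fastforce
  show "(\<Union>i\<in>K l. B i) \<subseteq> {..<n}" using K(2) B(2) by auto
next
  fix l l' assume "l < k" "l' < k" "l \<noteq> l'"
  then have K: "K l \<inter> K l' = {}" "K l \<subseteq> {..<D}" "K l' \<subseteq> {..<D}"
    using assms(2) by (auto simp: disjoint_blocks_def)
  have "x \<notin> B i'" if "i \<in> K l" "i' \<in> K l'" "x \<in> B i" for x i i'
  proof -
    have "i \<noteq> i'" "i < D" "i' < D" using K that by auto
    then have "B i \<inter> B i' = {}" using assms(1) by (simp add: disjoint_blocks_def)
    then show ?thesis using that(3) by blast
  qed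
  then show "(\<Union>i\<in>K l. B i) \<inter> (\<Union>i\<in>K l'. B i) = {}"
    by blast
qed

lemma sum_UN_blocks:
  assumes "disjoint_blocks n D B" "K \<subseteq> {..<D}"
  shows "(\<Sum>j\<in>(\<Union>i\<in>K. B i). f j) = (\<Sum>i\<in>K. \<Sum>j\<in>B i. f j)"
proof (rule sum.UNION_disjoint)
  show "finite K" using assms(2) finite_subset by blast
  have "B i \<subseteq> {..<n}" if "i \<in> K" for i
    using assms that by (auto simp: disjoint_blocks_def)
  then show "\<forall>i\<in>K. finite (B i)" using finite_subset by blast
  show "\<forall>i\<in>K. \<forall>i'\<in>K. i \<noteq> i' \<longrightarrow> B i \<inter> B i' = {}"
    using assms(2) by (meson disjoint_blocksD(3)[OF assms(1)] lessThan_iff subsetD)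
qed

definition block_sums :: "'a::comm_monoid_add list \<Rightarrow> nat \<Rightarrow> (nat \<Rightarrow> nat set) \<Rightarrow> 'a list" where
  "block_sums xs D B = map (\<lambda>i. \<Sum>j\<in>B i. xs ! j) [0..<D]"

lemma has_disj_zero_sums_of_block_sums:
  assumes B: "disjoint_blocks (length xs) D B" and "has_disj_zero_sums k (block_sums xs D B)"
  shows "has_disj_zero_sums k xs"
proof -
  obtain K where K: "disjoint_blocks D k K" "\<forall>l<k. (\<Sum>i\<in>K l. block_sums xs D B ! i) = 0"
    using assms(2) by (auto simp: has_disj_zero_sums_iff_blocks block_sums_def)
  have "(\<Sum>j\<in>(\<Union>i\<in>K l. B i). xs ! j) = 0" if "l < k" for l
  proof -
    have KD: "K l \<subseteq> {..<D}" using K(1) that by (auto simp: disjoint_blocks_def)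
    have "(\<Sum>j\<in>(\<Union>i\<in>K l. B i). xs ! j) = (\<Sum>i\<in>K l. \<Sum>j\<in>B i. xs ! j)"
      by (rule sum_UN_blocks[OF B KD])
    also have "\<dots> = (\<Sum>i\<in>K l. block_sums xs D B ! i)"
      using KD by (auto simp: block_sums_def intro!: sum.cong)
    finally show ?thesis using K(2) that by simp
  qed
  then show ?thesis
    using disjoint_blocks_UN[OF B K(1)] by (auto simp: has_disj_zero_sums_iff_blocks)
qed

lemma has_disj_zero_sums_of_map_nth:
  assumes "has_disj_zero_sums k (map ((!) xs) ns)" "distinct ns" "set ns \<subseteq> {..<length xs}"
  shows "has_disj_zero_sums k xs"
proof (rule has_disj_zero_sums_of_block_sums)
  show "disjoint_blocks (length xs) (length ns) (\<lambda>a. {ns ! a})"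
    unfolding disjoint_blocks_def
  proof (intro conjI allI impI)
    fix a assume "a < length ns"
    then show "{ns ! a} \<noteq> {}" "{ns ! a} \<subseteq> {..<length xs}"
      using assms(3) nth_mem by auto
  next
    fix a a' assume "a < length ns" "a' < length ns" "a \<noteq> a'"
    then show "{ns ! a} \<inter> {ns ! a'} = {}"
      using nth_eq_iff_index_eq[OF assms(2)] by auto
  qed
  have "block_sums xs (length ns) (\<lambda>a. {ns ! a}) = map ((!) xs) ns"
    by (rule nth_equalityI) (simp_all add: block_sums_def)
  then show "has_disj_zero_sums k (block_sums xs (length ns) (\<lambda>a. {ns ! a}))"
    using assms(1) by simp
qed

lemma disjoint_blocks_append:
  assumes B: "disjoint_blocks m k B" and C: "disjoint_blocks n l C"
  shows "disjoint_blocks (m + n) (k + l) (\<lambda>i. if i < k then B i else (+) m ` C (i - k))"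
    (is "disjoint_blocks _ _ ?BC")
proof -
  have low: "?BC i = B i" "?BC i \<noteq> {}" "?BC i \<subseteq> {..<m}" if "i < k" for i
    using that disjoint_blocksD(1,2)[OF B] by auto
  have high: "?BC i = (+) m ` C (i - k)" "?BC i \<noteq> {}" "?BC i \<subseteq> {m..<m + n}"
    if "\<not> i < k" "i < k + l" for i
  proof -
    have "i - k < l" using that by linarith
    note C_i = disjoint_blocksD(1,2)[OF C this]
    show "?BC i = (+) m ` C (i - k)" "?BC i \<noteq> {}" "?BC i \<subseteq> {m..<m + n}"
      using that(1) C_i by auto
  qed
  show ?thesis
    unfolding disjoint_blocks_def
  proof (intro conjI allI impI)
    fix i assume "i < k + l"
    then show "?BC i \<noteq> {}" "?BC i \<subseteq> {..<m + n}"
      using low[of i] high[of i] by (cases "i < k"; force)+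
  next
    fix i i' assume ii': "i < k + l" "i' < k + l" "i \<noteq> i'"
    show "?BC i \<inter> ?BC i' = {}"
    proof (cases "i < k"; cases "i' < k")
      assume "i < k" "i' < k"
      then show ?thesis using low disjoint_blocksD(3)[OF B] ii'(3) by simp
    next
      assume "\<not> i < k" "\<not> i' < k"
      then have "C (i - k) \<inter> C (i' - k) = {}"
        using disjoint_blocksD(3)[OF C] ii' by simp
      then show ?thesis using high \<open>\<not> i < k\<close> \<open>\<not> i' < k\<close> ii' by auto
    qed (use low high ii' in fastforce)+
  qed
qed

lemma has_disj_zero_sums_append:
  assumes "has_disj_zero_sums k xs" "has_disj_zero_sums l ys"
  shows "has_disj_zero_sums (k + l) (xs @ ys)"
proof -
  obtain B where B: "disjoint_blocks (length xs) k B" "\<forall>i<k. (\<Sum>j\<in>B i. xs ! j) = 0"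
    using assms(1) by (auto simp: has_disj_zero_sums_iff_blocks)
  obtain C where C: "disjoint_blocks (length ys) l C" "\<forall>i<l. (\<Sum>j\<in>C i. ys ! j) = 0"
    using assms(2) by (auto simp: has_disj_zero_sums_iff_blocks)
  define BC where "BC i = (if i < k then B i else (+) (length xs) ` C (i - k))" for i
  have "disjoint_blocks (length (xs @ ys)) (k + l) BC"
    unfolding BC_def using disjoint_blocks_append[OF B(1) C(1)] by simp
  moreover have "(\<Sum>j\<in>BC i. (xs @ ys) ! j) = 0" if "i < k + l" for i
  proof (cases "i < k")
    case True
    then have "B i \<subseteq> {..<length xs}" using disjoint_blocksD(2)[OF B(1)] by blast
    then have "(\<Sum>j\<in>B i. (xs @ ys) ! j) = (\<Sum>j\<in>B i. xs ! j)"
      by (intro sum.cong) (auto simp: nth_append)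
    then show ?thesis using B(2) True by (simp add: BC_def)
  next
    case False
    then have "(\<Sum>j\<in>BC i. (xs @ ys) ! j) = (\<Sum>j\<in>C (i - k). ys ! j)"
      by (simp add: BC_def sum.reindex)
    then show ?thesis using C(2) False that by simp
  qed
  ultimately show ?thesis by (auto simp: has_disj_zero_sums_iff_blocks)
qed

lemma has_disj_zero_sums_zeros:
  assumes "\<forall>x\<in>set xs. x = 0"
  shows "has_disj_zero_sums (length xs) xs"
  unfolding has_disj_zero_sums_iff_blocks
proof (intro exI conjI)
  show "disjoint_blocks (length xs) (length xs) (\<lambda>i. {i})"
    by (simp add: disjoint_blocks_def)
  show "\<forall>i<length xs. (\<Sum>j\<in>{i}. xs ! j) = 0"
    using assms by simp
qed

lemma has_disj_zero_sums_map_iff: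
  assumes "additive f"
  shows "has_disj_zero_sums k (map f xs) \<longleftrightarrow>
           (\<exists>B. disjoint_blocks (length xs) k B \<and> (\<forall>i<k. f (\<Sum>j\<in>B i. xs ! j) = 0))"
proof -
  have "(\<Sum>j\<in>B i. map f xs ! j) = f (\<Sum>j\<in>B i. xs ! j)"
    if "disjoint_blocks (length xs) k B" "i < k" for B i
  proof -
    have "B i \<subseteq> {..<length xs}" using that by (auto simp: disjoint_blocks_def)
    then show ?thesis by (auto simp: additive.sum[OF assms] intro!: sum.cong)
  qed
  then show ?thesis by (auto simp: has_disj_zero_sums_iff_blocks)
qed

lemma has_disj_zero_sums_one_C2pow:
  assumes "set xs \<subseteq> C2pow m" "card (C2pow m) < length xs"
  shows "has_disj_zero_sums 1 xs"
proof -
  have "card (set xs) < length xs"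
    using assms card_mono[OF finite_C2pow] by (meson le_less_trans)
  then have "\<not> distinct xs" using distinct_card by fastforce
  then obtain i j where ij: "i < length xs" "j < length xs" "i \<noteq> j" "xs ! i = xs ! j"
    by (auto simp: distinct_conv_nth)
  show ?thesis
    unfolding has_disj_zero_sums_iff_blocks
  proof (intro exI conjI)
    show "disjoint_blocks (length xs) 1 (\<lambda>_. {i, j})"
      using ij by (simp add: disjoint_blocks_def)
    show "\<forall>l<1. (\<Sum>a\<in>{i, j}. xs ! a) = 0"
      using ij by simp
  qed
qed

lemma has_disj_zero_sums_C2pow_long:
  assumes "set xs \<subseteq> C2pow m" "k * Suc (card (C2pow m)) \<le> length xs"
  shows "has_disj_zero_sums k xs"
  using assms
proof (induction k arbitrary: xs)
  case 0
  then show ?case by (simp add: has_disj_zero_sums_def)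
next
  case (Suc k)
  let ?c = "Suc (card (C2pow m))"
  have "has_disj_zero_sums 1 (take ?c xs)"
    using Suc.prems by (intro has_disj_zero_sums_one_C2pow) (auto dest: in_set_takeD)
  moreover have "has_disj_zero_sums k (drop ?c xs)"
    using Suc.prems by (intro Suc.IH) (auto dest: in_set_dropD)
  ultimately show ?case
    using has_disj_zero_sums_append[of 1 "take ?c xs" k "drop ?c xs"] by simp
qed

lemma Dk_le:
  assumes "\<And>xs. set xs \<subseteq> G \<Longrightarrow> l \<le> length xs \<Longrightarrow> has_disj_zero_sums k xs"
  shows "Dk k G \<le> l"
  unfolding Dk_def by (rule Least_le) (use assms in blast)

lemma has_disj_zero_sums_if_Dk_le:
  assumes "set xs \<subseteq> C2pow m" "Dk k (C2pow m) \<le> length xs"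
  shows "has_disj_zero_sums k xs"
proof -
  have "\<exists>l. \<forall>xs. set xs \<subseteq> C2pow m \<and> l \<le> length xs \<longrightarrow> has_disj_zero_sums k xs"
    using has_disj_zero_sums_C2pow_long by blast
  from LeastI_ex[OF this] show ?thesis
    using assms unfolding Dk_def by blast
qed

lemma Dk_ge: "k \<le> Dk k (C2pow m)"
proof -
  have "has_disj_zero_sums k (replicate (Dk k (C2pow m)) (0 :: nat \<Rightarrow> bit))"
    by (rule has_disj_zero_sums_if_Dk_le) auto
  then show ?thesis using has_disj_zero_sums_length_le by fastforce
qed

section \<open>Gaussian elimination\<close>

text \<open>One elimination step: clear coordinate \<open>c\<close> of \<open>u\<close> with the pivot \<open>v\<close> (where \<open>v c = 1\<close>),
  then delete coordinate \<open>c\<close>, shifting the higher coordinates down.\<close>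
definition eliminate :: "nat \<Rightarrow> (nat \<Rightarrow> bit) \<Rightarrow> (nat \<Rightarrow> bit) \<Rightarrow> nat \<Rightarrow> bit" where
  "eliminate c v u i = (let j = if i < c then i else Suc i in u j + u c * v j)"

lemma additive_eliminate: "additive (eliminate c v)"
  by unfold_locales (simp add: eliminate_def fun_eq_iff Let_def algebra_simps)

lemma eliminate_self: "v c = 1 \<Longrightarrow> eliminate c v v = 0"
  by (simp add: eliminate_def fun_eq_iff Let_def)

lemma eliminate_C2pow:
  assumes "u \<in> C2pow (Suc m)" "v \<in> C2pow (Suc m)" "c \<le> m"
  shows "eliminate c v u \<in> C2pow m"
  using assms by (simp add: C2pow_def eliminate_def Let_def)

lemma eliminate_eq_0D:
  assumes "eliminate c v u = 0" "u c = 0"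
  shows "u = 0"
proof
  fix i
  have e: "eliminate c v u j = 0" for j using assms(1) by simp
  show "u i = 0 i"
  proof (cases "i < c")
    case True
    then show ?thesis using e[of i] assms(2) by (simp add: eliminate_def)
  next
    case False
    show ?thesis
    proof (cases "i = c")
      case True
      then show ?thesis using assms(2) by simp
    next
      case False
      with \<open>\<not> i < c\<close> have "\<not> i - 1 < c" "Suc (i - 1) = i" by auto
      then show ?thesis using e[of "i - 1"] assms(2) by (simp add: eliminate_def)
    qed
  qed
qed

definition kernel_embedding ::
    "nat \<Rightarrow> nat \<Rightarrow> ((nat \<Rightarrow> bit) \<Rightarrow> nat \<Rightarrow> bit) \<Rightarrow> ((nat \<Rightarrow> bit) \<Rightarrow> nat \<Rightarrow> bit) \<Rightarrow> bool" where
  "kernel_embedding r s \<psi> \<pi> \<longleftrightarrow> additive \<psi> \<and> additive \<pi> \<and> range \<psi> \<subseteq> C2pow s \<and>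
     (\<forall>y\<in>C2pow r. \<pi> y = 0 \<longrightarrow> \<psi> y = 0 \<longrightarrow> y = 0)"

lemma kernel_embedding_id: "kernel_embedding r 0 (\<lambda>_. 0) id"
  by (simp add: kernel_embedding_def additive_def)

lemma kernel_embedding_mono:
  "kernel_embedding r s \<psi> \<pi> \<Longrightarrow> s \<le> s' \<Longrightarrow> kernel_embedding r s' \<psi> \<pi>"
  using C2pow_mono by (fastforce simp: kernel_embedding_def)

text \<open>Coordinate \<open>s\<close> of the new \<open>\<psi>\<close> records the coordinate \<open>c\<close> that \<open>eliminate\<close> discards.\<close>
lemma kernel_embedding_eliminate:
  assumes "kernel_embedding r s \<psi> \<pi>"
  shows "kernel_embedding r (Suc s) (\<lambda>y. (\<psi> y)(s := \<pi> y c)) (eliminate c v \<circ> \<pi>)"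
  unfolding kernel_embedding_def
proof (intro conjI ballI impI)
  have \<psi>: "additive \<psi>" and \<pi>: "additive \<pi>" and range: "range \<psi> \<subseteq> C2pow s"
    using assms by (auto simp: kernel_embedding_def)
  show "additive (\<lambda>y. (\<psi> y)(s := \<pi> y c))"
    using additive.add[OF \<psi>] additive.add[OF \<pi>] by unfold_locales (simp add: fun_eq_iff)
  show "additive (eliminate c v \<circ> \<pi>)"
    using additive.add[OF \<pi>] additive.add[OF additive_eliminate] by unfold_locales simp
  show "range (\<lambda>y. (\<psi> y)(s := \<pi> y c)) \<subseteq> C2pow (Suc s)"
    using range by (auto simp: C2pow_def)
  fix y assume "y \<in> C2pow r" "(eliminate c v \<circ> \<pi>) y = 0" "(\<psi> y)(s := \<pi> y c) = 0"
  moreover have "\<psi> y s = 0" using range by (auto simp: C2pow_def)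
  ultimately show "y = 0"
    using assms eliminate_eq_0D[of c v "\<pi> y"]
    by (auto simp: kernel_embedding_def fun_eq_iff split: if_splits)
qed

lemma gaussian_elimination:
  assumes "s \<le> r" "set xs \<subseteq> C2pow r"
  shows "\<exists>\<psi> \<pi>. kernel_embedding r s \<psi> \<pi> \<and>
           ((\<pi> ` C2pow r \<subseteq> C2pow (r - s) \<and>
             (\<exists>P \<subseteq> {..<length xs}. card P = s \<and> (\<forall>p\<in>P. \<pi> (xs ! p) = 0))) \<or>
            (\<forall>x\<in>set xs. \<pi> x = 0))"
  using assms(1)
proof (induction s)
  case 0
  have "kernel_embedding r 0 (\<lambda>_. 0) id" by (rule kernel_embedding_id)
  then show ?case by force
next
  case (Suc s)
  then have "s \<le> r" by simp
  with Suc.IH obtain \<psi> \<pi> where emb: "kernel_embedding r s \<psi> \<pi>" and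
    reduced: "(\<pi> ` C2pow r \<subseteq> C2pow (r - s) \<and>
               (\<exists>P \<subseteq> {..<length xs}. card P = s \<and> (\<forall>p\<in>P. \<pi> (xs ! p) = 0))) \<or>
              (\<forall>x\<in>set xs. \<pi> x = 0)"
    by blast
  show ?case
  proof (cases "\<forall>x\<in>set xs. \<pi> x = 0")
    case True
    then show ?thesis using kernel_embedding_mono[OF emb le_SucI[OF order_refl]] by blast
  next
    case False
    then obtain j where j: "j < length xs" "\<pi> (xs ! j) \<noteq> 0"
      by (auto simp: in_set_conv_nth)
    obtain P where P: "P \<subseteq> {..<length xs}" "card P = s" "\<forall>p\<in>P. \<pi> (xs ! p) = 0"
      and into: "\<pi> ` C2pow r \<subseteq> C2pow (r - s)"
      using reduced False by auto
    define v where "v = \<pi> (xs ! j)"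
    obtain c where c: "v c = 1" using j(2) by (auto simp: v_def fun_eq_iff)
    have "xs ! j \<in> C2pow r" using nth_mem[OF j(1)] assms(2) by blast
    then have v: "v \<in> C2pow (r - s)" unfolding v_def by (rule subsetD[OF into imageI])
    then have "c < r - s" using c by (auto simp: C2pow_def not_less[symmetric])
    then have rs: "r - s = Suc (r - Suc s)" "c \<le> r - Suc s" by auto
    define \<pi>' where "\<pi>' = eliminate c v \<circ> \<pi>"
    have "kernel_embedding r (Suc s) (\<lambda>y. (\<psi> y)(s := \<pi> y c)) \<pi>'"
      unfolding \<pi>'_def by (rule kernel_embedding_eliminate[OF emb])
    moreover have "\<pi>' ` C2pow r \<subseteq> C2pow (r - Suc s)"
      using into v rs eliminate_C2pow by (auto simp: \<pi>'_def)
    moreover have "\<forall>p\<in>insert j P. \<pi>' (xs ! p) = 0"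
      using P(3) additive.zero[OF additive_eliminate] eliminate_self[of v c, OF c]
      by (simp add: \<pi>'_def v_def)
    moreover have "card (insert j P) = Suc s"
      using P j by (auto simp: finite_subset)
    moreover have "insert j P \<subseteq> {..<length xs}" using P(1) j(1) by auto
    ultimately show ?thesis by blast
  qed
qed

lemma has_disj_zero_sums_via_kernel:
  assumes emb: "kernel_embedding r s \<psi> \<pi>" and xs: "set xs \<subseteq> C2pow r"
    and "has_disj_zero_sums D (map \<pi> xs)" "Dk k (C2pow s) \<le> D"
  shows "has_disj_zero_sums k xs"
proof -
  have \<psi>: "additive \<psi>" and \<pi>: "additive \<pi>" and range: "range \<psi> \<subseteq> C2pow s"
    and inj: "\<And>y. y \<in> C2pow r \<Longrightarrow> \<pi> y = 0 \<Longrightarrow> \<psi> y = 0 \<Longrightarrow> y = 0"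
    using emb by (auto simp: kernel_embedding_def)
  obtain B where B: "disjoint_blocks (length xs) D B" "\<forall>i<D. \<pi> (\<Sum>j\<in>B i. xs ! j) = 0"
    using assms(3) has_disj_zero_sums_map_iff[OF \<pi>] by blast
  define ys where "ys = block_sums xs D B"
  have "xs ! j \<in> C2pow r" if "i < D" "j \<in> B i" for i j
    using disjoint_blocksD(2)[OF B(1) that(1)] that(2) xs nth_mem by blast
  then have ys: "set ys \<subseteq> C2pow r" "\<forall>y\<in>set ys. \<pi> y = 0"
    using B(2) by (auto simp: ys_def block_sums_def intro!: C2pow_sum)
  have "has_disj_zero_sums k (map \<psi> ys)"
    using range assms(4) by (intro has_disj_zero_sums_if_Dk_le) (auto simp: ys_def block_sums_def)
  then obtain K where K: "disjoint_blocks (length ys) k K" "\<forall>l<k. \<psi> (\<Sum>i\<in>K l. ys ! i) = 0"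
    using has_disj_zero_sums_map_iff[OF \<psi>] by blast
  have "(\<Sum>i\<in>K l. ys ! i) = 0" if "l < k" for l
  proof (rule inj)
    have "ys ! i \<in> C2pow r" "\<pi> (ys ! i) = 0" if "i \<in> K l" for i
      using ys disjoint_blocksD(2)[OF K(1) \<open>l < k\<close>] that nth_mem by blast+
    then show "(\<Sum>i\<in>K l. ys ! i) \<in> C2pow r" "\<pi> (\<Sum>i\<in>K l. ys ! i) = 0"
      by (auto simp: additive.sum[OF \<pi>] intro: C2pow_sum)
    show "\<psi> (\<Sum>i\<in>K l. ys ! i) = 0" using K(2) that by blast
  qed
  then have "has_disj_zero_sums k ys"
    using K(1) by (auto simp: has_disj_zero_sums_iff_blocks)
  then show ?thesis
    using has_disj_zero_sums_of_block_sums[OF B(1)] by (simp add: ys_def)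
qed

lemma has_disj_zero_sums_with_pivots:
  assumes emb: "kernel_embedding r s \<psi> \<pi>" and xs: "set xs \<subseteq> C2pow r"
    and into: "\<pi> ` C2pow r \<subseteq> C2pow (r - s)"
    and P: "P \<subseteq> {..<length xs}" "card P = s" "\<forall>p\<in>P. \<pi> (xs ! p) = 0"
    and long: "Dk (Dk k (C2pow s) - s) (C2pow (r - s)) + s \<le> length xs"
  shows "has_disj_zero_sums k xs"
proof -
  define D where "D = Dk k (C2pow s)"
  define qs where "qs = sorted_list_of_set ({..<length xs} - P)"
  define ps where "ps = sorted_list_of_set P"
  have fin: "finite P" using P(1) finite_subset by blast
  have qs: "distinct qs" "set qs = {..<length xs} - P" "length qs = length xs - s"
    using card_Diff_subset[OF fin P(1)] P(2) by (simp_all add: qs_def)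
  have ps: "distinct ps" "set ps = P" "length ps = s"
    using fin P(2) by (simp_all add: ps_def)
  have "has_disj_zero_sums (D - s) (map \<pi> (map ((!) xs) qs))"
  proof (rule has_disj_zero_sums_if_Dk_le)
    show "set (map \<pi> (map ((!) xs) qs)) \<subseteq> C2pow (r - s)"
      using qs(2) xs into by (auto dest!: nth_mem)
    show "Dk (D - s) (C2pow (r - s)) \<le> length (map \<pi> (map ((!) xs) qs))"
      using long qs(3) by (simp add: D_def)
  qed
  moreover have "has_disj_zero_sums s (map \<pi> (map ((!) xs) ps))"
    using has_disj_zero_sums_zeros[of "map \<pi> (map ((!) xs) ps)"] ps(2,3) P(3) by simp
  ultimately have "has_disj_zero_sums (D - s + s) (map \<pi> (map ((!) xs) qs) @ map \<pi> (map ((!) xs) ps))"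
    by (rule has_disj_zero_sums_append)
  then have "has_disj_zero_sums (D - s + s) (map \<pi> (map ((!) xs) (qs @ ps)))"
    by simp
  then have zero_sums: "has_disj_zero_sums D (map \<pi> (map ((!) xs) (qs @ ps)))"
    by (rule has_disj_zero_sums_mono) simp
  have idx: "set (qs @ ps) = {..<length xs}"
    using qs(2) ps(2) P(1) by auto
  have "set (map ((!) xs) (qs @ ps)) \<subseteq> C2pow r"
  proof
    fix y assume "y \<in> set (map ((!) xs) (qs @ ps))"
    then obtain j where "j < length xs" "y = xs ! j" using idx by auto
    then show "y \<in> C2pow r" using xs nth_mem by blast
  qed
  then have "has_disj_zero_sums k (map ((!) xs) (qs @ ps))"
    by (rule has_disj_zero_sums_via_kernel[OF emb _ zero_sums]) (simp add: D_def)
  moreover have "distinct (qs @ ps)"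
    by (simp add: qs(1,2) ps(1,2) Int_commute)
  moreover have "set (qs @ ps) \<subseteq> {..<length xs}"
    using idx by simp
  ultimately show ?thesis
    by (rule has_disj_zero_sums_of_map_nth)
qed

theorem theorem7p15:
  fixes k r s :: nat
  assumes "k \<ge> 1" and "s \<le> r"
  shows "Dk k (C2pow r) \<le> Dk (Dk k (C2pow s) - s) (C2pow (r - s)) + s"
proof (rule Dk_le)
  fix xs assume xs: "set xs \<subseteq> C2pow r"
    and long: "Dk (Dk k (C2pow s) - s) (C2pow (r - s)) + s \<le> length xs"
  obtain \<psi> \<pi> where emb: "kernel_embedding r s \<psi> \<pi>" and
    reduced: "(\<pi> ` C2pow r \<subseteq> C2pow (r - s) \<and>
               (\<exists>P \<subseteq> {..<length xs}. card P = s \<and> (\<forall>p\<in>P. \<pi> (xs ! p) = 0))) \<or>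
              (\<forall>x\<in>set xs. \<pi> x = 0)"
    using gaussian_elimination[OF assms(2) xs] by blast
  show "has_disj_zero_sums k xs"
  proof (cases "\<forall>x\<in>set xs. \<pi> x = 0")
    case True
    have "Dk k (C2pow s) \<le> length xs"
      using long Dk_ge[of "Dk k (C2pow s) - s" "r - s"] by linarith
    moreover have "has_disj_zero_sums (length xs) (map \<pi> xs)"
      using has_disj_zero_sums_zeros[of "map \<pi> xs"] True by simp
    ultimately show ?thesis
      using has_disj_zero_sums_mono by (intro has_disj_zero_sums_via_kernel[OF emb xs]) auto
  next
    case False
    then show ?thesis
      using reduced has_disj_zero_sums_with_pivots[OF emb xs _ _ _ _ long] by blast
  qed
qed

end
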